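(* Let $n\ge 1$ be odd and let $\mathbb{P}^n=\mathrm{Proj}\,\mathbb{F}_q[x_0,\dots,x_n]$. Set $$g=\sum_{\substack{0\le i\le n-1\\ i \text{ even}}}\left(x_i^qx_{i+1}-x_ix_{i+1}^q\right).$$ Then $V(g)\subset\mathbb{P}^n$ is a smooth hypersurface of degree $q+1$ with $V(g)(\mathbb{F}_q)=\mathbb{P}^n(\mathbb{F}_q)$; moreover, if $n\ge 3$, $V(g)$ is geometrically irreducible.
   Context: $\mathbb{F}_q$ is the finite field of order $q=p^r$. For a projective $\mathbb{F}_q$-scheme $X$, $X(\mathbb{F}_q)$ denotes its set of $\mathbb{F}_q$-rational points. *)

theory Defs
  imports Main "HOL-Library.Poly_Mapping" "HOL-Computational_Algebra.Factorial_Ring"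
begin

text \<open>Multivariate polynomials in the variables x_0, x_1, ... over a commutative ring 'a,
  represented as finitely supported maps from monomials (exponent vectors) to coefficients.\<close>

type_synonym 'a mpoly = "(nat \<Rightarrow>\<^sub>0 nat) \<Rightarrow>\<^sub>0 'a"

definition mvar :: "nat \<Rightarrow> 'a::comm_ring_1 mpoly" where
  "mvar i = Poly_Mapping.single (Poly_Mapping.single i 1) 1"

definition meval :: "'a::comm_ring_1 mpoly \<Rightarrow> (nat \<Rightarrow> 'a) \<Rightarrow> 'a" where
  "meval p x = (\<Sum>m::nat \<Rightarrow>\<^sub>0 nat\<in>Poly_Mapping.keys p. Poly_Mapping.lookup p m * (\<Prod>i\<in>Poly_Mapping.keys m. x i ^ Poly_Mapping.lookup m i))"

definition mpderiv :: "nat \<Rightarrow> 'a::comm_ring_1 mpoly \<Rightarrow> 'a mpoly" where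
  "mpderiv i p = (\<Sum>m::nat \<Rightarrow>\<^sub>0 nat\<in>Poly_Mapping.keys p.
      Poly_Mapping.single (m - Poly_Mapping.single i 1) (of_nat (Poly_Mapping.lookup m i) * Poly_Mapping.lookup p m))"

definition mon_deg :: "(nat \<Rightarrow>\<^sub>0 nat) \<Rightarrow> nat" where
  "mon_deg m = (\<Sum>i\<in>Poly_Mapping.keys m. Poly_Mapping.lookup m i)"

definition homogeneous :: "nat \<Rightarrow> 'a::comm_ring_1 mpoly \<Rightarrow> bool" where
  "homogeneous d p \<longleftrightarrow> (\<forall>m\<in>Poly_Mapping.keys p. mon_deg m = d)"

definition in_vars :: "nat \<Rightarrow> 'a::comm_ring_1 mpoly \<Rightarrow> bool" where
  "in_vars n p \<longleftrightarrow> (\<forall>m\<in>Poly_Mapping.keys p. Poly_Mapping.keys m \<subseteq> {0..n})"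

text \<open>Ring homomorphism (between fields: field embedding).\<close>
definition ring_hom_fun :: "('a::comm_ring_1 \<Rightarrow> 'b::comm_ring_1) \<Rightarrow> bool" where
  "ring_hom_fun \<phi> \<longleftrightarrow> \<phi> 0 = 0 \<and> \<phi> 1 = 1 \<and> (\<forall>a b. \<phi> (a + b) = \<phi> a + \<phi> b)
     \<and> (\<forall>a b. \<phi> (a * b) = \<phi> a * \<phi> b)"

definition gpoly :: "nat \<Rightarrow> nat \<Rightarrow> 'a::comm_ring_1 mpoly" where
  "gpoly q n = (\<Sum>i\<in>{i. i < n \<and> even i}.
      mvar i ^ q * mvar (Suc i) - mvar i * mvar (Suc i) ^ q)"

definition smooth_hypersurface :: "nat \<Rightarrow> 'a::field mpoly \<Rightarrow> bool" where
  "smooth_hypersurface n p \<longleftrightarrow>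
     (\<forall>x::nat \<Rightarrow> 'a. (\<exists>i\<le>n. x i \<noteq> 0) \<longrightarrow>
        \<not> (meval p x = 0 \<and> (\<forall>i\<le>n. meval (mpderiv i p) x = 0)))"

text \<open>V(p) is irreducible (as a topological space) iff p is associated to a power of an
  irreducible polynomial (radical of (p) is prime).\<close>
definition irreducible_hypersurface :: "'a::field mpoly \<Rightarrow> bool" where
  "irreducible_hypersurface p \<longleftrightarrow>
     (\<exists>h k. irreducible h \<and> k > 0 \<and> p dvd h ^ k \<and> h ^ k dvd p)"

end

theory Submission
  imports Defs "HOL-Number_Theory.Residues"
begin

text \<open>Group the variables into the pairs \<open>(x\<^sub>i, x\<^sub>i\<^sub>+\<^sub>1)\<close>, \<open>i\<close> even. Rational points: \<open>a\<^sup>q = a\<close> on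
  \<open>\<bbbF>\<^sub>q\<close>, so every summand \<open>x\<^sub>i\<^sup>q x\<^sub>i\<^sub>+\<^sub>1 - x\<^sub>i x\<^sub>i\<^sub>+\<^sub>1\<^sup>q\<close> vanishes. Smoothness: since \<open>q = 0\<close> in the
  field, \<open>\<partial>g/\<partial>x\<^sub>i\<^sub>+\<^sub>1 = x\<^sub>i\<^sup>q\<close> and \<open>\<partial>g/\<partial>x\<^sub>i = -x\<^sub>i\<^sub>+\<^sub>1\<^sup>q\<close>, so a singular point has all
  coordinates zero. The coefficients of \<open>g\<close> are \<open>\<plusminus>1\<close>, so over any extension field it is the
  same polynomial, and irreducibility is shown over an arbitrary field by comparing leading
  monomials of \<open>g = a b\<close> for suitable lexicographic weight orders: for each pair, one factor
  contains neither \<open>x\<^sub>i\<close> nor \<open>x\<^sub>i\<^sub>+\<^sub>1\<close> while the other contains \<open>x\<^sub>i\<close>; as no monomial of \<open>g\<close>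
  involves two pairs, one factor owns every pair and the other is a constant. The case
  \<open>n = 1\<close> fails because the first step needs a monomial of \<open>g\<close> outside the pair.\<close>

section \<open>Polynomial evaluation\<close>

lemma sum_when_eq_inj_on:
  assumes "finite A" "inj_on f A"
  shows "(\<Sum>i\<in>A. c when f i = m) = (if m \<in> f ` A then c else 0)"
proof -
  have "(\<Sum>i\<in>A. c when f i = m) = (\<Sum>k\<in>f ` A. c when k = m)"
    using sum.reindex[OF assms(2), of "\<lambda>k. c when k = m"] by simp
  also have "\<dots> = (if m \<in> f ` A then c else 0)"
    using assms(1) by (simp add: when_def)
  finally show ?thesis .
qed

lemma sum_eq_term: "finite A \<Longrightarrow> a \<in> A \<Longrightarrow> (\<And>b. b \<in> A \<Longrightarrow> b \<noteq> a \<Longrightarrow> f b = 0) \<Longrightarrow> sum f A = f a"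
  by (simp add: sum.mono_neutral_right[of A "{a}"])

lemma mvar_power: "mvar i ^ k = Poly_Mapping.single (Poly_Mapping.single i k) 1"
  by (induction k) (simp_all add: mvar_def mult_single single_add[symmetric] add.commute)

definition mon :: "(nat \<Rightarrow>\<^sub>0 nat) \<Rightarrow> (nat \<Rightarrow> 'a::comm_ring_1) \<Rightarrow> 'a" where
  "mon m x = (\<Prod>i\<in>Poly_Mapping.keys m. x i ^ Poly_Mapping.lookup m i)"

lemma mon_superset:
  "finite K \<Longrightarrow> Poly_Mapping.keys m \<subseteq> K \<Longrightarrow> mon m x = (\<Prod>i\<in>K. x i ^ Poly_Mapping.lookup m i)"
  unfolding mon_def by (rule prod.mono_neutral_left) (auto simp: in_keys_iff)

lemma mon_pair:
  assumes "\<And>k. k \<noteq> i \<Longrightarrow> k \<noteq> Suc i \<Longrightarrow> Poly_Mapping.lookup m k = 0"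
  shows "mon m x = x i ^ Poly_Mapping.lookup m i * x (Suc i) ^ Poly_Mapping.lookup m (Suc i)"
  using assms by (subst mon_superset[of "{i, Suc i}"]) (auto simp: in_keys_iff)

lemma meval_superset:
  "finite K \<Longrightarrow> Poly_Mapping.keys p \<subseteq> K \<Longrightarrow>
   meval p x = (\<Sum>m\<in>K. Poly_Mapping.lookup p m * mon m x)"
  unfolding meval_def mon_def[symmetric] by (rule sum.mono_neutral_left) (auto simp: in_keys_iff)

lemma meval_add: "meval (p + p') x = meval p x + meval p' x"
proof -
  let ?K = "Poly_Mapping.keys p \<union> Poly_Mapping.keys p'"
  have "meval (p + p') x = (\<Sum>m\<in>?K. Poly_Mapping.lookup (p + p') m * mon m x)"
    by (rule meval_superset) (auto dest: subsetD[OF keys_add])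
  also have "\<dots> = (\<Sum>m\<in>?K. Poly_Mapping.lookup p m * mon m x) + (\<Sum>m\<in>?K. Poly_Mapping.lookup p' m * mon m x)"
    by (simp add: lookup_add distrib_right sum.distrib)
  also have "\<dots> = meval p x + meval p' x"
    by (simp add: meval_superset[symmetric])
  finally show ?thesis .
qed

lemma meval_sum: "meval (\<Sum>i\<in>S. f i) x = (\<Sum>i\<in>S. meval (f i) x)"
  by (induction S rule: infinite_finite_induct) (simp_all add: meval_add meval_def[of 0])

lemma meval_single: "meval (Poly_Mapping.single m c) x = c * mon m x"
  by (subst meval_superset[of "{m}"]) auto

lemma meval_mpderiv_superset:
  "finite K \<Longrightarrow> Poly_Mapping.keys p \<subseteq> K \<Longrightarrow> meval (mpderiv j p) x =
   (\<Sum>m\<in>K. Poly_Mapping.lookup p m *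
      (of_nat (Poly_Mapping.lookup m j) * mon (m - Poly_Mapping.single j 1) x))"
  unfolding mpderiv_def meval_sum meval_single
  by (rule sum.mono_neutral_cong_left) (auto simp: in_keys_iff)

lemma ring_hom_fun_uminus_one:
  assumes "ring_hom_fun \<phi>" shows "\<phi> (-1) = -1"
proof -
  have "\<phi> (-1) + 1 = \<phi> (-1 + 1)" using assms unfolding ring_hom_fun_def by metis
  then show ?thesis using assms unfolding ring_hom_fun_def by (simp add: eq_neg_iff_add_eq_0)
qed

lemma ring_hom_fun_of_nat: "ring_hom_fun \<phi> \<Longrightarrow> \<phi> (of_nat k) = of_nat k"
  unfolding ring_hom_fun_def by (induction k) auto

section \<open>Finite fields\<close>

lemma of_nat_card_UNIV: "of_nat (card (UNIV :: 'a::{finite,ring_1} set)) = (0::'a)"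
  using CHAR_dvd_CARD of_nat_eq_0_iff_char_dvd by blast

lemma power_card_UNIV: "(a::'a::{finite,field}) ^ card (UNIV :: 'a set) = a"
proof (cases "a = 0")
  case False
  let ?U = "UNIV - {0::'a}"
  have "a ^ card ?U * (\<Prod>x\<in>?U. x) = (\<Prod>x\<in>?U. a * x)"
    by (simp add: prod.distrib)
  also have "\<dots> = (\<Prod>x\<in>?U. x)"
    by (rule prod.reindex_bij_witness[of _ "\<lambda>x. x / a" "\<lambda>x. a * x"]) (use False in auto)
  finally have "a ^ card ?U = 1" by simp
  moreover have "card (UNIV :: 'a set) = Suc (card ?U)"
    using card_Diff_singleton[of 0 "UNIV :: 'a set"] card_gt_0_iff[of "UNIV :: 'a set"] by simp
  ultimately show ?thesis by (metis mult.right_neutral power_Suc)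
qed (simp add: card_gt_0_iff)

lemma two_le_card_UNIV: "2 \<le> card (UNIV :: 'a::{finite,field} set)"
  using card_mono[OF finite_UNIV, of "{0::'a, 1}"] by simp

section \<open>Leading monomials for lexicographic orders\<close>

definition lex_less :: "(nat \<Rightarrow> 'b::linorder) \<Rightarrow> (nat \<Rightarrow> 'b) \<Rightarrow> bool" where
  "lex_less u v \<longleftrightarrow> (\<exists>i. u i < v i \<and> (\<forall>j<i. u j = v j))"

lemma lex_less_irrefl: "\<not> lex_less u u"
  by (auto simp: lex_less_def)

lemma lex_less_trans: "lex_less u v \<Longrightarrow> lex_less v w \<Longrightarrow> lex_less u w"
  unfolding lex_less_def by (metis linorder_neqE_nat order.strict_trans)

lemma lex_less_linear:
  assumes "u \<noteq> v" shows "lex_less u v \<or> lex_less v u"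
proof -
  define i where "i = (LEAST i. u i \<noteq> v i)"
  have "u i \<noteq> v i" unfolding i_def by (rule LeastI_ex) (use assms in auto)
  moreover have "\<forall>j<i. u j = v j" unfolding i_def using not_less_Least by blast
  ultimately show ?thesis unfolding lex_less_def by (metis linorder_neqE)
qed

lemma lex_less_add_right:
  fixes u v w :: "nat \<Rightarrow> 'b::linordered_ab_group_add"
  shows "lex_less u v \<Longrightarrow> lex_less (\<lambda>i. u i + w i) (\<lambda>i. v i + w i)"
  unfolding lex_less_def by auto

lemma lex_less_imp_le_first_two:
  assumes "lex_less u v" shows "u 0 \<le> v 0 \<and> (u 0 = v 0 \<longrightarrow> u 1 \<le> v 1)"
proof -
  obtain i where i: "u i < v i" "\<forall>j<i. u j = v j" using assms unfolding lex_less_def by blast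
  have "u 0 \<le> v 0" using i by (cases "i = 0") (auto intro: less_imp_le)
  moreover have "u 1 \<le> v 1" if "u 0 = v 0"
    using i that by (cases "i = 0"; cases "i = 1") (auto intro: less_imp_le)
  ultimately show ?thesis by blast
qed

locale lex_embedding =
  fixes \<kappa> :: "(nat \<Rightarrow>\<^sub>0 nat) \<Rightarrow> nat \<Rightarrow> int"
  assumes inj_embedding: "inj \<kappa>"
    and embedding_add: "\<kappa> (m + m') = (\<lambda>i. \<kappa> m i + \<kappa> m' i)"
begin

definition leading :: "'a::zero mpoly \<Rightarrow> (nat \<Rightarrow>\<^sub>0 nat) \<Rightarrow> bool" where
  "leading p m \<longleftrightarrow> m \<in> Poly_Mapping.keys p \<and>
     (\<forall>m'\<in>Poly_Mapping.keys p. m' \<noteq> m \<longrightarrow> lex_less (\<kappa> m') (\<kappa> m))"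

lemma exists_lex_max:
  "finite S \<Longrightarrow> S \<noteq> {} \<Longrightarrow> \<exists>m\<in>S. \<forall>m'\<in>S. m' \<noteq> m \<longrightarrow> lex_less (\<kappa> m') (\<kappa> m)"
proof (induction S rule: finite_ne_induct)
  case (insert x F)
  then obtain m where m: "m \<in> F" "\<forall>m'\<in>F. m' \<noteq> m \<longrightarrow> lex_less (\<kappa> m') (\<kappa> m)" by auto
  show ?case
  proof (cases "lex_less (\<kappa> m) (\<kappa> x)")
    case True
    have "lex_less (\<kappa> m') (\<kappa> x)" if "m' \<in> F" for m'
      using True m that lex_less_trans by (cases "m' = m") auto
    then show ?thesis by auto
  next
    case False
    then have "x = m \<or> lex_less (\<kappa> x) (\<kappa> m)" using lex_less_linear inj_embedding by (metis injD)
    then show ?thesis using m by (intro bexI[of _ m]) auto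
  qed
qed simp

lemma leading_exists: "p \<noteq> 0 \<Longrightarrow> \<exists>m. leading p m"
  using exists_lex_max[of "Poly_Mapping.keys p"] unfolding leading_def by auto

lemma leading_le_first_two:
  assumes "leading p m" "m' \<in> Poly_Mapping.keys p"
  shows "\<kappa> m' 0 \<le> \<kappa> m 0 \<and> (\<kappa> m' 0 = \<kappa> m 0 \<longrightarrow> \<kappa> m' 1 \<le> \<kappa> m 1)"
  using assms lex_less_imp_le_first_two unfolding leading_def by (cases "m' = m") auto

lemma lex_less_sum_of_keys:
  assumes "leading a ma" "leading b mb" "u \<in> Poly_Mapping.keys a" "v \<in> Poly_Mapping.keys b"
    and "(u, v) \<noteq> (ma, mb)"
  shows "lex_less (\<kappa> (u + v)) (\<kappa> (ma + mb))"
proof -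
  have "lex_less (\<kappa> (u + v)) (\<kappa> (ma + v))" if "u \<noteq> ma"
    using that assms lex_less_add_right[of "\<kappa> u" "\<kappa> ma" "\<kappa> v"] unfolding leading_def embedding_add by auto
  moreover have "lex_less (\<kappa> (ma + v)) (\<kappa> (ma + mb))" if "v \<noteq> mb"
    using that assms lex_less_add_right[of "\<kappa> v" "\<kappa> mb" "\<kappa> ma"] unfolding leading_def embedding_add
    by (auto simp: add.commute)
  ultimately show ?thesis using assms(5) lex_less_trans by (cases "u = ma"; cases "v = mb") auto
qed

lemma lookup_mult_leading:
  fixes a b :: "'a::comm_semiring_0 mpoly"
  assumes "leading a ma" "leading b mb"
  shows "Poly_Mapping.lookup (a * b) (ma + mb) = Poly_Mapping.lookup a ma * Poly_Mapping.lookup b mb"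
proof -
  have "Poly_Mapping.lookup (a * b) (ma + mb) =
      (\<Sum>(u, v). Poly_Mapping.lookup a u * Poly_Mapping.lookup b v when ma + mb = u + v)"
    by (simp add: lookup_mult prod_fun_def[symmetric] prod_fun_unfold_prod)
  also have "\<dots> = (\<Sum>uv. Poly_Mapping.lookup a ma * Poly_Mapping.lookup b mb when uv = (ma, mb))"
  proof (rule Sum_any.cong, clarify)
    fix u v
    have "Poly_Mapping.lookup a u * Poly_Mapping.lookup b v = 0"
      if "ma + mb = u + v" "(u, v) \<noteq> (ma, mb)"
    proof (rule ccontr)
      assume "Poly_Mapping.lookup a u * Poly_Mapping.lookup b v \<noteq> 0"
      then have "u \<in> Poly_Mapping.keys a" "v \<in> Poly_Mapping.keys b" by (auto simp: in_keys_iff)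
      then show False
        using lex_less_sum_of_keys[OF assms _ _ that(2)] that(1) lex_less_irrefl by metis
    qed
    then show "(Poly_Mapping.lookup a u * Poly_Mapping.lookup b v when ma + mb = u + v) =
        (Poly_Mapping.lookup a ma * Poly_Mapping.lookup b mb when (u, v) = (ma, mb))"
      by (auto simp: when_def)
  qed
  finally show ?thesis by simp
qed

lemma leading_mult:
  fixes a b :: "'a::idom mpoly"
  assumes "leading a ma" "leading b mb"
  shows "leading (a * b) (ma + mb)"
proof -
  have "ma + mb \<in> Poly_Mapping.keys (a * b)"
    using assms by (simp add: lookup_mult_leading in_keys_iff leading_def)
  moreover have "lex_less (\<kappa> k) (\<kappa> (ma + mb))" if "k \<in> Poly_Mapping.keys (a * b)" "k \<noteq> ma + mb" for k
    using that keys_mult[of a b] lex_less_sum_of_keys[OF assms] by blast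
  ultimately show ?thesis unfolding leading_def by blast
qed

end

text \<open>Lexicographic comparison of \<open>(s\<^sub>1\<cdot>deg\<^bsub>j\<^sub>1\<^esub>, s\<^sub>2\<cdot>deg\<^bsub>j\<^sub>2\<^esub>, exponent vector)\<close>; a negative
  sign turns maximising a degree into minimising it, the exponent vector breaks ties.\<close>

definition pair_weight :: "nat \<Rightarrow> int \<Rightarrow> nat \<Rightarrow> int \<Rightarrow> (nat \<Rightarrow>\<^sub>0 nat) \<Rightarrow> nat \<Rightarrow> int" where
  "pair_weight j1 s1 j2 s2 m k =
     (if k = 0 then s1 * int (Poly_Mapping.lookup m j1)
      else if k = 1 then s2 * int (Poly_Mapping.lookup m j2)
      else int (Poly_Mapping.lookup m (k - 2)))"

interpretation pair_order: lex_embedding "pair_weight j1 s1 j2 s2" for j1 s1 j2 s2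
proof
  show "inj (pair_weight j1 s1 j2 s2)"
  proof (rule injI, rule poly_mapping_eqI)
    fix m m' k assume "pair_weight j1 s1 j2 s2 m = pair_weight j1 s1 j2 s2 m'"
    then have "pair_weight j1 s1 j2 s2 m (k + 2) = pair_weight j1 s1 j2 s2 m' (k + 2)" by simp
    then show "Poly_Mapping.lookup m k = Poly_Mapping.lookup m' k" by (simp add: pair_weight_def)
  qed
qed (auto simp: pair_weight_def lookup_add algebra_simps)

lemma pair_order_leading_le:
  assumes "pair_order.leading j1 s1 j2 s2 p m" "m' \<in> Poly_Mapping.keys p"
  shows "s1 * int (Poly_Mapping.lookup m' j1) \<le> s1 * int (Poly_Mapping.lookup m j1)
    \<and> (s1 * int (Poly_Mapping.lookup m' j1) = s1 * int (Poly_Mapping.lookup m j1) \<longrightarrow>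
        s2 * int (Poly_Mapping.lookup m' j2) \<le> s2 * int (Poly_Mapping.lookup m j2))"
  using pair_order.leading_le_first_two[OF assms] by (simp add: pair_weight_def)

section \<open>The monomials of \<open>g\<close>\<close>

definition gmon_fst :: "nat \<Rightarrow> nat \<Rightarrow> (nat \<Rightarrow>\<^sub>0 nat)" where
  "gmon_fst q i = Poly_Mapping.single i q + Poly_Mapping.single (Suc i) 1"

definition gmon_snd :: "nat \<Rightarrow> nat \<Rightarrow> (nat \<Rightarrow>\<^sub>0 nat)" where
  "gmon_snd q i = Poly_Mapping.single i 1 + Poly_Mapping.single (Suc i) q"

lemma lookup_gmon_fst:
  "Poly_Mapping.lookup (gmon_fst q i) k = (if k = i then q else if k = Suc i then 1 else 0)"
  by (auto simp: gmon_fst_def lookup_add lookup_single)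

lemma lookup_gmon_snd:
  "Poly_Mapping.lookup (gmon_snd q i) k = (if k = i then 1 else if k = Suc i then q else 0)"
  by (auto simp: gmon_snd_def lookup_add lookup_single)

lemma keys_gmon_fst: "1 \<le> q \<Longrightarrow> Poly_Mapping.keys (gmon_fst q i) = {i, Suc i}"
  by (auto simp: in_keys_iff lookup_gmon_fst split: if_splits)

lemma keys_gmon_snd: "1 \<le> q \<Longrightarrow> Poly_Mapping.keys (gmon_snd q i) = {i, Suc i}"
  by (auto simp: in_keys_iff lookup_gmon_snd split: if_splits)

lemma gmon_fst_inject: "2 \<le> q \<Longrightarrow> gmon_fst q i = gmon_fst q j \<longleftrightarrow> i = j"
  by (metis lookup_gmon_fst n_not_Suc_n numeral_le_one_iff semiring_norm(69) zero_neq_numeral le_zero_eq)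

lemma gmon_snd_inject: "2 \<le> q \<Longrightarrow> gmon_snd q i = gmon_snd q j \<longleftrightarrow> i = j"
  by (metis lookup_gmon_snd Suc_inject n_not_Suc_n numeral_le_one_iff semiring_norm(69) zero_neq_numeral le_zero_eq)

lemma gmon_fst_neq_snd: "2 \<le> q \<Longrightarrow> even i \<Longrightarrow> even j \<Longrightarrow> gmon_fst q i \<noteq> gmon_snd q j"
  by (metis lookup_gmon_fst lookup_gmon_snd even_Suc numeral_le_one_iff semiring_norm(69) zero_neq_numeral le_zero_eq)

abbreviation pair_starts :: "nat \<Rightarrow> nat set" where
  "pair_starts n \<equiv> {i. i < n \<and> even i}"

lemma gpoly_eq_sum_single: "gpoly q n = (\<Sum>i\<in>pair_starts n.
   Poly_Mapping.single (gmon_fst q i) (1::'a::comm_ring_1) - Poly_Mapping.single (gmon_snd q i) 1)"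
  unfolding gpoly_def mvar_power by (simp add: mvar_def mult_single gmon_fst_def gmon_snd_def)

lemma lookup_gpoly:
  assumes "2 \<le> q"
  shows "Poly_Mapping.lookup (gpoly q n :: 'a::comm_ring_1 mpoly) m =
    (if m \<in> gmon_fst q ` pair_starts n then 1 else if m \<in> gmon_snd q ` pair_starts n then -1 else 0)"
proof -
  have "inj_on (gmon_fst q) A" "inj_on (gmon_snd q) A" for A
    using assms by (auto simp: inj_on_def gmon_fst_inject gmon_snd_inject)
  moreover have "m \<notin> gmon_fst q ` pair_starts n" if "m \<in> gmon_snd q ` pair_starts n"
    using that gmon_fst_neq_snd[OF assms] by (metis (no_types, lifting) imageE mem_Collect_eq)
  ultimately show ?thesis
    by (simp add: gpoly_eq_sum_single lookup_sum lookup_minus lookup_single sum_subtractf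
        sum_when_eq_inj_on)
qed

lemma keys_gpoly:
  "2 \<le> q \<Longrightarrow> Poly_Mapping.keys (gpoly q n :: 'a::comm_ring_1 mpoly) =
     gmon_fst q ` pair_starts n \<union> gmon_snd q ` pair_starts n"
  by (auto simp: in_keys_iff lookup_gpoly split: if_splits)

lemma in_keys_gpoly_iff:
  "2 \<le> q \<Longrightarrow> m \<in> Poly_Mapping.keys (gpoly q n :: 'a::comm_ring_1 mpoly) \<longleftrightarrow>
     (\<exists>i\<in>pair_starts n. m = gmon_fst q i \<or> m = gmon_snd q i)"
  by (auto simp: keys_gpoly)

lemma gpoly_nonzero:
  assumes "2 \<le> q" "0 < n" shows "(gpoly q n :: 'a::comm_ring_1 mpoly) \<noteq> 0"
proof -
  have "gmon_fst q 0 \<in> Poly_Mapping.keys (gpoly q n :: 'a mpoly)"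
    using assms by (auto simp: in_keys_gpoly_iff)
  then show ?thesis by auto
qed

lemma in_vars_gpoly: "2 \<le> q \<Longrightarrow> in_vars n (gpoly q n :: 'a::comm_ring_1 mpoly)"
  by (auto simp: in_vars_def in_keys_gpoly_iff keys_gmon_fst keys_gmon_snd)

lemma homogeneous_gpoly: "2 \<le> q \<Longrightarrow> homogeneous (q + 1) (gpoly q n :: 'a::comm_ring_1 mpoly)"
  by (auto simp: homogeneous_def in_keys_gpoly_iff mon_deg_def keys_gmon_fst keys_gmon_snd
      lookup_gmon_fst lookup_gmon_snd)

lemma map_gpoly:
  assumes "ring_hom_fun (\<phi> :: 'a::comm_ring_1 \<Rightarrow> 'b::comm_ring_1)" "2 \<le> q"
  shows "Poly_Mapping.map \<phi> (gpoly q n :: 'a mpoly) = gpoly q n"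
  using assms ring_hom_fun_uminus_one[OF assms(1)]
  by (intro poly_mapping_eqI) (simp add: map.rep_eq lookup_gpoly when_def ring_hom_fun_def)

lemma gpoly_key_pair_zero_iff:
  "2 \<le> q \<Longrightarrow> m \<in> Poly_Mapping.keys (gpoly q n :: 'a::comm_ring_1 mpoly) \<Longrightarrow> i \<in> pair_starts n \<Longrightarrow>
   Poly_Mapping.lookup m i = 0 \<longleftrightarrow> Poly_Mapping.lookup m (Suc i) = 0"
  by (auto simp: in_keys_gpoly_iff lookup_gmon_fst lookup_gmon_snd split: if_splits)

lemma gpoly_key_avoiding_pair:
  assumes "2 \<le> q" "3 \<le> n" "i \<in> pair_starts n"
  obtains m where "m \<in> Poly_Mapping.keys (gpoly q n :: 'a::comm_ring_1 mpoly)"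
    "Poly_Mapping.lookup m i = 0" "Poly_Mapping.lookup m (Suc i) = 0"
proof -
  define i' where "i' = (if i = 0 then 2 else (0::nat))"
  have "i' \<in> pair_starts n" using assms by (auto simp: i'_def)
  then have "gmon_fst q i' \<in> Poly_Mapping.keys (gpoly q n :: 'a mpoly)"
    by (subst in_keys_gpoly_iff[OF assms(1)]) blast
  moreover have "Poly_Mapping.lookup (gmon_fst q i') i = 0" "Poly_Mapping.lookup (gmon_fst q i') (Suc i) = 0"
    using assms by (auto simp: i'_def lookup_gmon_fst)
  ultimately show ?thesis using that by blast
qed

lemma gpoly_key_lookup_eq_1:
  "2 \<le> q \<Longrightarrow> m \<in> Poly_Mapping.keys (gpoly q n :: 'a::comm_ring_1 mpoly) \<Longrightarrow> i \<in> pair_starts n \<Longrightarrow>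
   2 \<le> Poly_Mapping.lookup m (Suc i) \<Longrightarrow> Poly_Mapping.lookup m i = 1"
  by (auto simp: in_keys_gpoly_iff lookup_gmon_fst lookup_gmon_snd split: if_splits)

lemma gpoly_key_single_pair:
  "2 \<le> q \<Longrightarrow> m \<in> Poly_Mapping.keys (gpoly q n :: 'a::comm_ring_1 mpoly) \<Longrightarrow>
   i \<in> pair_starts n \<Longrightarrow> i' \<in> pair_starts n \<Longrightarrow>
   0 < Poly_Mapping.lookup m i \<Longrightarrow> 0 < Poly_Mapping.lookup m i' \<Longrightarrow> i = i'"
  by (auto simp: in_keys_gpoly_iff lookup_gmon_fst lookup_gmon_snd split: if_splits)

lemma gpoly_key_beyond:
  "2 \<le> q \<Longrightarrow> m \<in> Poly_Mapping.keys (gpoly q n :: 'a::comm_ring_1 mpoly) \<Longrightarrow> n < k \<Longrightarrow>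
   Poly_Mapping.lookup m k = 0"
  by (auto simp: in_keys_gpoly_iff lookup_gmon_fst lookup_gmon_snd)

section \<open>Rational points and smoothness\<close>

lemma mon_gmon_fst: "mon (gmon_fst q i) x = x i ^ q * x (Suc i)"
  by (subst mon_pair[of i]) (auto simp: lookup_gmon_fst)

lemma mon_gmon_snd: "mon (gmon_snd q i) x = x i * x (Suc i) ^ q"
  by (subst mon_pair[of i]) (auto simp: lookup_gmon_snd)

lemma sum_keys_gpoly:
  assumes "2 \<le> q"
  shows "(\<Sum>m\<in>Poly_Mapping.keys (gpoly q n :: 'a::comm_ring_1 mpoly).
      Poly_Mapping.lookup (gpoly q n :: 'a mpoly) m * F m)
    = (\<Sum>i\<in>pair_starts n. F (gmon_fst q i)) - (\<Sum>i\<in>pair_starts n. F (gmon_snd q i))"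
    (is "(\<Sum>m\<in>_. ?g m * F m) = _")
proof -
  let ?A = "gmon_fst q ` pair_starts n" and ?B = "gmon_snd q ` pair_starts n"
  have inj: "inj_on (gmon_fst q) A" "inj_on (gmon_snd q) A" for A
    using assms by (auto simp: inj_on_def gmon_fst_inject gmon_snd_inject)
  have disj: "?A \<inter> ?B = {}"
    using gmon_fst_neq_snd[OF assms] by auto
  have "(\<Sum>m\<in>Poly_Mapping.keys (gpoly q n :: 'a mpoly). ?g m * F m)
      = (\<Sum>m\<in>?A. ?g m * F m) + (\<Sum>m\<in>?B. ?g m * F m)"
    using disj by (simp add: keys_gpoly[OF assms] sum.union_disjoint)
  also have "(\<Sum>m\<in>?A. ?g m * F m) = (\<Sum>m\<in>?A. F m)"
    by (rule sum.cong) (auto simp: lookup_gpoly[OF assms])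
  also have "(\<Sum>m\<in>?B. ?g m * F m) = (\<Sum>m\<in>?B. - F m)"
    by (rule sum.cong) (use disj in \<open>auto simp: lookup_gpoly[OF assms]\<close>)
  finally show ?thesis
    by (simp add: sum.reindex[OF inj(1)] sum.reindex[OF inj(2)] sum_negf)
qed

lemma meval_gpoly:
  "2 \<le> q \<Longrightarrow> meval (gpoly q n :: 'a::comm_ring_1 mpoly) x
     = (\<Sum>i\<in>pair_starts n. x i ^ q * x (Suc i)) - (\<Sum>i\<in>pair_starts n. x i * x (Suc i) ^ q)"
  by (simp add: meval_superset[OF _ order_refl] sum_keys_gpoly mon_gmon_fst mon_gmon_snd)

lemma meval_gpoly_finite_field:
  assumes "card (UNIV :: 'a::{finite,field} set) = q"
  shows "meval (gpoly q n :: 'a mpoly) x = 0"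
  using assms two_le_card_UNIV[where 'a='a] power_card_UNIV[where 'a='a] by (simp add: meval_gpoly)

lemma meval_mpderiv_gpoly:
  assumes "2 \<le> q"
  shows "meval (mpderiv j (gpoly q n :: 'a::comm_ring_1 mpoly)) x =
    (\<Sum>i\<in>pair_starts n. of_nat (Poly_Mapping.lookup (gmon_fst q i) j)
        * mon (gmon_fst q i - Poly_Mapping.single j 1) x)
    - (\<Sum>i\<in>pair_starts n. of_nat (Poly_Mapping.lookup (gmon_snd q i) j)
        * mon (gmon_snd q i - Poly_Mapping.single j 1) x)"
  by (simp add: meval_mpderiv_superset[OF _ order_refl] sum_keys_gpoly[OF assms])

lemma meval_mpderiv_gpoly_Suc:
  assumes "2 \<le> q" "of_nat q = (0::'a::comm_ring_1)" "i \<in> pair_starts n"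
  shows "meval (mpderiv (Suc i) (gpoly q n :: 'a mpoly)) x = x i ^ q"
proof -
  let ?e = "Poly_Mapping.single (Suc i) 1"
  have "meval (mpderiv (Suc i) (gpoly q n :: 'a mpoly)) x
      = of_nat (Poly_Mapping.lookup (gmon_fst q i) (Suc i)) * mon (gmon_fst q i - ?e) x
      - of_nat (Poly_Mapping.lookup (gmon_snd q i) (Suc i)) * mon (gmon_snd q i - ?e) x"
    unfolding meval_mpderiv_gpoly[OF assms(1)] using assms(3)
    by (intro arg_cong2[where f = minus] sum_eq_term) (auto simp: lookup_gmon_fst lookup_gmon_snd)
  also have "\<dots> = x i ^ q"
    using assms(2) by (subst mon_pair[of i]) (auto simp: lookup_minus lookup_gmon_fst lookup_gmon_snd lookup_single)
  finally show ?thesis .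
qed

lemma meval_mpderiv_gpoly_even:
  assumes "2 \<le> q" "of_nat q = (0::'a::comm_ring_1)" "i \<in> pair_starts n"
  shows "meval (mpderiv i (gpoly q n :: 'a mpoly)) x = - (x (Suc i) ^ q)"
proof -
  let ?e = "Poly_Mapping.single i 1"
  have "meval (mpderiv i (gpoly q n :: 'a mpoly)) x
      = of_nat (Poly_Mapping.lookup (gmon_fst q i) i) * mon (gmon_fst q i - ?e) x
      - of_nat (Poly_Mapping.lookup (gmon_snd q i) i) * mon (gmon_snd q i - ?e) x"
    unfolding meval_mpderiv_gpoly[OF assms(1)] using assms(3)
    by (intro arg_cong2[where f = minus] sum_eq_term) (auto simp: lookup_gmon_fst lookup_gmon_snd)
  also have "\<dots> = - (x (Suc i) ^ q)"
    using assms(2) by (subst mon_pair[of i]) (auto simp: lookup_minus lookup_gmon_fst lookup_gmon_snd lookup_single)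
  finally show ?thesis .
qed

lemma smooth_gpoly:
  assumes "odd n" "2 \<le> q" "of_nat q = (0::'a::field)"
  shows "smooth_hypersurface n (gpoly q n :: 'a mpoly)"
  unfolding smooth_hypersurface_def
proof (intro allI impI notI)
  fix x :: "nat \<Rightarrow> 'a"
  assume nonzero: "\<exists>i\<le>n. x i \<noteq> 0"
    and singular: "meval (gpoly q n) x = 0 \<and> (\<forall>i\<le>n. meval (mpderiv i (gpoly q n)) x = 0)"
  have "x k = 0" if "k \<le> n" for k
  proof (cases "even k")
    case True
    with that assms(1) have "k \<in> pair_starts n" by (cases "k = n") auto
    then show ?thesis
      using singular meval_mpderiv_gpoly_Suc[OF assms(2,3), of k n x] that assms(1) True
      by (simp add: Suc_le_eq)
  next
    case False
    then obtain i where i: "k = Suc i" by (cases k) auto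
    with False that have "i \<in> pair_starts n" by auto
    then show ?thesis
      using singular meval_mpderiv_gpoly_even[OF assms(2,3), of i n x] that i by simp
  qed
  with nonzero show False by auto
qed

section \<open>Irreducibility\<close>

definition avoids :: "'a::zero mpoly \<Rightarrow> nat \<Rightarrow> bool" where
  "avoids p j \<longleftrightarrow> (\<forall>m\<in>Poly_Mapping.keys p. Poly_Mapping.lookup m j = 0)"

lemma irreducible_hypersurface_if_irreducible: "irreducible p \<Longrightarrow> irreducible_hypersurface p"
  unfolding irreducible_hypersurface_def by (intro exI[of _ p] exI[of _ 1]) auto

locale gpoly_factorization =
  fixes q n :: nat and a b :: "'a::idom mpoly"
  assumes q: "2 \<le> q" and n: "3 \<le> n" "odd n" and factorization: "gpoly q n = a * b"
begin

lemma swap: "gpoly_factorization q n b a"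
  using q n factorization by unfold_locales (simp_all add: mult.commute)

lemma factors_nonzero: "a \<noteq> 0" "b \<noteq> 0"
  using gpoly_nonzero[OF q, of n] n factorization by auto

lemma leading_factors:
  obtains ma mb where "pair_order.leading j1 s1 j2 s2 a ma" "pair_order.leading j1 s1 j2 s2 b mb"
    "pair_order.leading j1 s1 j2 s2 (gpoly q n :: 'a mpoly) (ma + mb)"
proof -
  obtain ma mb where ma: "pair_order.leading j1 s1 j2 s2 a ma" and mb: "pair_order.leading j1 s1 j2 s2 b mb"
    using pair_order.leading_exists factors_nonzero by metis
  moreover have "pair_order.leading j1 s1 j2 s2 (gpoly q n :: 'a mpoly) (ma + mb)"
    unfolding factorization using ma mb by (rule pair_order.leading_mult)
  ultimately show thesis using that by blast
qed

text \<open>Minimise the degree in \<open>x\<^sub>j\<close> first: \<open>g\<close> has a monomial free of the pair, so both leading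
  monomials are free of the pair, and then a monomial of \<open>a\<close> free of \<open>x\<^sub>j\<close> cannot involve the
  partner \<open>x\<^sub>j\<^sub>'\<close>.\<close>

lemma factor_key_partner_zero:
  assumes i: "i \<in> pair_starts n" and jj: "(j = i \<and> j' = Suc i) \<or> (j = Suc i \<and> j' = i)"
    and m: "m \<in> Poly_Mapping.keys a" "Poly_Mapping.lookup m j = 0"
  shows "Poly_Mapping.lookup m j' = 0"
proof -
  obtain ma mb where ma: "pair_order.leading j (-1) j' 1 a ma"
    and mg: "pair_order.leading j (-1) j' 1 (gpoly q n :: 'a mpoly) (ma + mb)"
    using leading_factors by blast
  have mg_key: "ma + mb \<in> Poly_Mapping.keys (gpoly q n :: 'a mpoly)"
    using mg unfolding pair_order.leading_def by simp
  obtain m0 where m0: "m0 \<in> Poly_Mapping.keys (gpoly q n :: 'a mpoly)" "Poly_Mapping.lookup m0 j = 0"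
    using gpoly_key_avoiding_pair[OF q n(1) i] jj by metis
  have "Poly_Mapping.lookup (ma + mb) j = 0"
    using pair_order_leading_le[OF mg m0(1)] m0(2) by simp
  then have "Poly_Mapping.lookup (ma + mb) j' = 0"
    using gpoly_key_pair_zero_iff[OF q mg_key i] jj by auto
  then show ?thesis
    using pair_order_leading_le[OF ma m(1)] m(2) \<open>Poly_Mapping.lookup (ma + mb) j = 0\<close>
    by (simp add: lookup_add)
qed

lemma avoids_pair_if_leading_avoids:
  assumes i: "i \<in> pair_starts n" and ma: "pair_order.leading (Suc i) 1 i 1 a ma"
    and "Poly_Mapping.lookup ma i = 0"
  shows "avoids a i \<and> avoids a (Suc i)"
proof -
  have "Poly_Mapping.lookup ma (Suc i) = 0"
    using factor_key_partner_zero[OF i] ma assms(3) unfolding pair_order.leading_def by blast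
  then have "avoids a (Suc i)"
    using pair_order_leading_le[OF ma] unfolding avoids_def by fastforce
  moreover from this have "avoids a i"
    using factor_key_partner_zero[OF i, of "Suc i" i] unfolding avoids_def by blast
  ultimately show ?thesis by blast
qed

text \<open>Maximising the degree in \<open>x\<^sub>i\<^sub>+\<^sub>1\<close> first picks out \<open>x\<^sub>i x\<^sub>i\<^sub>+\<^sub>1\<^sup>q\<close>, which is linear in \<open>x\<^sub>i\<close>.\<close>

lemma pair_owned_by_one_factor:
  assumes i: "i \<in> pair_starts n"
  shows "(avoids a i \<and> avoids a (Suc i) \<and> \<not> avoids b i)
       \<or> (avoids b i \<and> avoids b (Suc i) \<and> \<not> avoids a i)"
proof -
  obtain ma mb where ma: "pair_order.leading (Suc i) 1 i 1 a ma"
    and mb: "pair_order.leading (Suc i) 1 i 1 b mb"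
    and mg: "pair_order.leading (Suc i) 1 i 1 (gpoly q n :: 'a mpoly) (ma + mb)"
    using leading_factors by blast
  have mg_key: "ma + mb \<in> Poly_Mapping.keys (gpoly q n :: 'a mpoly)"
    using mg unfolding pair_order.leading_def by simp
  have "gmon_snd q i \<in> Poly_Mapping.keys (gpoly q n :: 'a mpoly)"
    using q i by (auto simp: in_keys_gpoly_iff)
  from pair_order_leading_le[OF mg this]
  have "q \<le> Poly_Mapping.lookup (ma + mb) (Suc i)"
    by (simp add: lookup_gmon_snd)
  then have sum: "Poly_Mapping.lookup ma i + Poly_Mapping.lookup mb i = 1"
    using gpoly_key_lookup_eq_1[OF q mg_key i] q by (simp add: lookup_add)
  have ma_key: "ma \<in> Poly_Mapping.keys a" and mb_key: "mb \<in> Poly_Mapping.keys b"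
    using ma mb unfolding pair_order.leading_def by auto
  show ?thesis
  proof (cases "Poly_Mapping.lookup ma i = 0")
    case True
    then have "\<not> avoids b i" using sum mb_key unfolding avoids_def by (auto intro!: bexI[of _ mb])
    then show ?thesis using avoids_pair_if_leading_avoids[OF i ma True] by blast
  next
    case False
    then have "Poly_Mapping.lookup mb i = 0" using sum by simp
    moreover have "\<not> avoids a i" using False ma_key unfolding avoids_def by (auto intro!: bexI[of _ ma])
    ultimately show ?thesis
      using gpoly_factorization.avoids_pair_if_leading_avoids[OF swap i mb] by blast
  qed
qed

lemma pairs_not_shared:
  assumes i: "i \<in> pair_starts n" and i': "i' \<in> pair_starts n" "i \<noteq> i'"
    and "avoids a i" "\<not> avoids b i" "avoids b i'" "\<not> avoids a i'"
  shows False
proof -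
  obtain ma mb where ma: "pair_order.leading i 1 i' 1 a ma"
    and mb: "pair_order.leading i 1 i' 1 b mb"
    and mg: "pair_order.leading i 1 i' 1 (gpoly q n :: 'a mpoly) (ma + mb)"
    using leading_factors by blast
  have mg_key: "ma + mb \<in> Poly_Mapping.keys (gpoly q n :: 'a mpoly)"
    using mg unfolding pair_order.leading_def by simp
  obtain m1 where m1: "m1 \<in> Poly_Mapping.keys b" "0 < Poly_Mapping.lookup m1 i"
    using \<open>\<not> avoids b i\<close> unfolding avoids_def by blast
  obtain m2 where m2: "m2 \<in> Poly_Mapping.keys a" "0 < Poly_Mapping.lookup m2 i'"
    using \<open>\<not> avoids a i'\<close> unfolding avoids_def by blast
  have "0 < Poly_Mapping.lookup mb i"
    using pair_order_leading_le[OF mb m1(1)] m1(2) by simp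
  moreover have "0 < Poly_Mapping.lookup ma i'"
    using pair_order_leading_le[OF ma m2(1)] m2(2) \<open>avoids a i\<close> ma
    unfolding avoids_def pair_order.leading_def by auto
  ultimately show False
    using gpoly_key_single_pair[OF q mg_key i i'(1)] i'(2) by (simp add: lookup_add)
qed

lemma avoids_beyond: "n < k \<Longrightarrow> avoids a k"
proof -
  assume k: "n < k"
  obtain ma mb where ma: "pair_order.leading k 1 k 1 a ma"
    and mg: "pair_order.leading k 1 k 1 (gpoly q n :: 'a mpoly) (ma + mb)"
    using leading_factors by blast
  have "ma + mb \<in> Poly_Mapping.keys (gpoly q n :: 'a mpoly)"
    using mg unfolding pair_order.leading_def by simp
  from gpoly_key_beyond[OF q this k] have "Poly_Mapping.lookup ma k = 0"
    by (simp add: lookup_add)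
  then show ?thesis
    using pair_order_leading_le[OF ma] unfolding avoids_def by fastforce
qed

lemma avoids_all_if_avoids_first_pair:
  assumes "avoids a 0" "\<not> avoids b 0"
  shows "avoids a k"
proof -
  have zero: "0 \<in> pair_starts n" using n by auto
  have pair: "avoids a i \<and> avoids a (Suc i)" if i: "i \<in> pair_starts n" for i
  proof -
    have "\<not> (avoids b i \<and> \<not> avoids a i)"
    proof (cases "i = 0")
      case False
      then show ?thesis using pairs_not_shared[OF zero i] assms by metis
    qed (use assms in auto)
    then show ?thesis using pair_owned_by_one_factor[OF i] by blast
  qed
  show ?thesis
  proof (cases "n < k")
    case False
    show ?thesis
    proof (cases "even k")
      case True
      then have "k \<in> pair_starts n" using False n(2) by (cases "k = n") auto
      then show ?thesis using pair by blast
    next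
      case odd: False
      then obtain i where "k = Suc i" by (cases k) auto
      moreover from this have "i \<in> pair_starts n" using False odd by auto
      ultimately show ?thesis using pair by blast
    qed
  qed (rule avoids_beyond)
qed

lemma factor_avoids_all: "(\<forall>k. avoids a k) \<or> (\<forall>k. avoids b k)"
  using pair_owned_by_one_factor[of 0] n avoids_all_if_avoids_first_pair
    gpoly_factorization.avoids_all_if_avoids_first_pair[OF swap] by (auto simp: odd_pos)

end

lemma dvd_one_if_avoids_all:
  fixes p :: "'a::field mpoly"
  assumes "p \<noteq> 0" "\<forall>k. avoids p k"
  shows "p dvd 1"
proof -
  have "Poly_Mapping.keys p \<subseteq> {0}"
    using assms(2) unfolding avoids_def by (auto intro: poly_mapping_eqI)
  then have p: "p = Poly_Mapping.single 0 (Poly_Mapping.lookup p 0)"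
    by (intro poly_mapping_eqI) (auto simp: lookup_single in_keys_iff when_def)
  then have "Poly_Mapping.lookup p 0 \<noteq> 0" using assms(1) by auto
  then have "p * Poly_Mapping.single 0 (inverse (Poly_Mapping.lookup p 0)) = 1"
    by (subst p) (simp add: mult_single)
  then show ?thesis by (metis dvdI)
qed

lemma gpoly_not_unit:
  assumes "2 \<le> q" "0 < n"
  shows "\<not> (gpoly q n :: 'a::idom mpoly) dvd 1"
proof
  assume "gpoly q n dvd (1 :: 'a mpoly)"
  then obtain b where b: "1 = (gpoly q n :: 'a mpoly) * b" by (auto elim: dvdE)
  then have "b \<noteq> 0" by auto
  obtain mg mb where mg: "pair_order.leading 0 1 0 1 (gpoly q n :: 'a mpoly) mg"
    and mb: "pair_order.leading 0 1 0 1 b mb"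
    using pair_order.leading_exists gpoly_nonzero[OF assms] \<open>b \<noteq> 0\<close> by metis
  have "mg + mb \<in> Poly_Mapping.keys (1 :: 'a mpoly)"
    using pair_order.leading_mult[OF mg mb] b unfolding pair_order.leading_def by simp
  then have "mg = 0" by (metis add_is_0 keys_one lookup_add lookup_zero poly_mapping_eqI singletonD)
  moreover have "mg \<in> Poly_Mapping.keys (gpoly q n :: 'a mpoly)"
    using mg unfolding pair_order.leading_def by simp
  then obtain i where "mg = gmon_fst q i \<or> mg = gmon_snd q i"
    using in_keys_gpoly_iff[OF assms(1)] by blast
  then have "Poly_Mapping.lookup mg i \<noteq> 0"
    using assms(1) by (auto simp: lookup_gmon_fst lookup_gmon_snd)
  ultimately show False by simp
qed

lemma irreducible_gpoly:
  assumes "2 \<le> q" "3 \<le> n" "odd n"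
  shows "irreducible (gpoly q n :: 'a::field mpoly)"
proof (rule irreducibleI)
  show "(gpoly q n :: 'a mpoly) \<noteq> 0" "\<not> (gpoly q n :: 'a mpoly) dvd 1"
    using gpoly_nonzero[of q n] gpoly_not_unit[of q n] assms by auto
next
  fix a b :: "'a mpoly"
  assume "gpoly q n = a * b"
  then interpret gpoly_factorization q n a b
    using assms by unfold_locales
  show "a dvd 1 \<or> b dvd 1"
    using factor_avoids_all factors_nonzero dvd_one_if_avoids_all by blast
qed

theorem mainTheorem6:
  fixes q n :: nat and g :: "'k::{finite,field} mpoly"
  assumes "odd n" and "card (UNIV :: 'k set) = q" and "g = gpoly q n"
  shows "g \<noteq> 0
    \<and> in_vars n g
    \<and> homogeneous (q + 1) g
    \<and> (\<forall>\<phi> :: 'k \<Rightarrow> 'L::field. ring_hom_fun \<phi> \<longrightarrow>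
          smooth_hypersurface n (Poly_Mapping.map \<phi> g))
    \<and> (\<forall>x :: nat \<Rightarrow> 'k. meval g x = 0)
    \<and> (n \<ge> 3 \<longrightarrow> (\<forall>\<phi> :: 'k \<Rightarrow> 'L::field. ring_hom_fun \<phi> \<longrightarrow>
          irreducible_hypersurface (Poly_Mapping.map \<phi> g)))"
proof -
  have q: "2 \<le> q" using two_le_card_UNIV[where 'a='k] assms(2) by simp
  have char: "of_nat q = (0::'k)" using of_nat_card_UNIV[where 'a='k] assms(2) by simp
  have smooth: "smooth_hypersurface n (Poly_Mapping.map \<phi> (gpoly q n))"
    if \<phi>: "ring_hom_fun (\<phi> :: 'k \<Rightarrow> 'L)" for \<phi>
  proof -
    have "of_nat q = (0::'L)" using ring_hom_fun_of_nat[OF \<phi>, of q] \<phi> char by (simp add: ring_hom_fun_def)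
    then show ?thesis using smooth_gpoly[OF assms(1) q] map_gpoly[OF \<phi> q] by simp
  qed
  have irreducible: "irreducible_hypersurface (Poly_Mapping.map \<phi> (gpoly q n))"
    if "3 \<le> n" "ring_hom_fun (\<phi> :: 'k \<Rightarrow> 'L)" for \<phi>
    using irreducible_gpoly[OF q that(1) assms(1), where 'a='L] map_gpoly[OF that(2) q]
    by (simp add: irreducible_hypersurface_if_irreducible)
  show ?thesis
    using gpoly_nonzero[OF q odd_pos[OF assms(1)], where 'a='k] in_vars_gpoly[OF q, where 'a='k]
      homogeneous_gpoly[OF q, where 'a='k] meval_gpoly_finite_field[OF assms(2)] smooth irreducible
    unfolding assms(3) by blast
qed

end
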